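(* For any $1\leq j<i<n$, the following equalities hold in $U^{\mathrm{rtt}}_v(L\mathfrak{gl}_n)$: $$\tilde e^\pm_{j,i+1}(z)=\frac{[\tilde e^{(0)}_{i,i+1},\tilde e^\pm_{ji}(z)]_{v^{-1}}}{v-v^{-1}},\qquad \tilde f^\pm_{i+1,j}(z)=\frac{[\tilde f^\pm_{ij}(z),\tilde f^{(0)}_{i+1,i}]_v}{v^{-1}-v}$$ (each for both signs $\pm$).
   Context: Let $v$ be a formal variable, $E_{ij}$ matrix units, $[a,b]_x=ab-x\,ba$. Let $R_{\mathrm{trig}}(z,w)=(vz-v^{-1}w)\sum_iE_{ii}\otimes E_{ii}+(z-w)\sum_{i\neq j}E_{ii}\otimes E_{jj}+(v-v^{-1})z\sum_{i<j}E_{ij}\otimes E_{ji}+(v-v^{-1})w\sum_{i>j}E_{ij}\otimes E_{ji}$. $\mathfrak{U}^{\mathrm{rtt}}_v(L\mathfrak{gl}_n)$ is the $\mathbb{C}[v,v^{-1}]$-algebra generated by $\{t^\pm_{ij}[\pm r]\}_{1\leq i,j\leq n}^{r\in\mathbb{N}}$ with relations $t^\pm_{ii}[0]t^\mp_{ii}[0]=1$; $t^+_{ij}[0]=t^-_{ji}[0]=0$ for $j<i$; $R_{\mathrm{trig}}(z,w)T^\epsilon_1(z)T^{\epsilon'}_2(w)=T^{\epsilon'}_2(w)T^\epsilon_1(z)R_{\mathrm{trig}}(z,w)$ for $(\epsilon,\epsilon')\in\{(+,+),(-,-),(-,+)\}$, where $T^\pm(z)=\sum_{i,j}t^\pm_{ij}(z)\otimes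 E_{ij}$, $t^\pm_{ij}(z)=\sum_{r\geq0}t^\pm_{ij}[\pm r]z^{\mp r}$. $U^{\mathrm{rtt}}_v(L\mathfrak{gl}_n)=\mathfrak{U}^{\mathrm{rtt}}_v(L\mathfrak{gl}_n)\otimes_{\mathbb{C}[v,v^{-1}]}\mathbb{C}(v)$. Gauss decomposition: $T^\pm(z)=\tilde F^\pm(z)\tilde G^\pm(z)\tilde E^\pm(z)$ with $\tilde F^\pm(z)=\sum_iE_{ii}+\sum_{i>j}\tilde f^\pm_{ij}(z)E_{ij}$, $\tilde G^\pm(z)=\sum_i\tilde g^\pm_i(z)E_{ii}$, $\tilde E^\pm(z)=\sum_iE_{ii}+\sum_{i<j}\tilde e^\pm_{ij}(z)E_{ij}$ (series in $z^{\mp1}$). Write $\tilde e^+_{ij}(z)=\sum_{r\geq0}\tilde e^{(r)}_{ij}z^{-r}$, $\tilde e^-_{ij}(z)=\sum_{r<0}\tilde e^{(r)}_{ij}z^{-r}$, $\tilde f^+_{ij}(z)=\sum_{r>0}\tilde f^{(r)}_{ij}z^{-r}$, $\tilde f^-_{ij}(z)=\sum_{r\leq0}\tilde f^{(r)}_{ij}z^{-r}$. *)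

theory Defs
  imports "HOL-Computational_Algebra.Formal_Power_Series"
          "HOL-Computational_Algebra.Fraction_Field" "HOL-Computational_Algebra.Polynomial"
begin

type_synonym Cv = "complex poly fract"

definition vv :: Cv where "vv = Fract [:0, 1:] 1"

definition Cv_algebra :: "(Cv \<Rightarrow> 'a::ring_1) \<Rightarrow> bool" where
  "Cv_algebra sc \<longleftrightarrow>
     sc 1 = 1 \<and> (\<forall>a b. sc (a + b) = sc a + sc b) \<and> (\<forall>a b. sc (a * b) = sc a * sc b)
     \<and> (\<forall>a x. sc a * x = x * sc a)"

definition qcomm :: "(Cv \<Rightarrow> 'a::ring_1) \<Rightarrow> Cv \<Rightarrow> 'a \<Rightarrow> 'a \<Rightarrow> 'a" where
  "qcomm sc x a b = a * b - sc x * (b * a)"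

text \<open>The coefficient of E_ab (x) E_cd in R_trig(z,w) is  Rz a b c d * z + Rw a b c d * w.\<close>
definition Rz :: "nat \<Rightarrow> nat \<Rightarrow> nat \<Rightarrow> nat \<Rightarrow> Cv" where
  "Rz a b c d =
     (if a = b \<and> c = d then (if a = c then vv else 1)
      else if c = b \<and> d = a \<and> a < b then vv - inverse vv
      else 0)"

definition Rw :: "nat \<Rightarrow> nat \<Rightarrow> nat \<Rightarrow> nat \<Rightarrow> Cv" where
  "Rw a b c d =
     (if a = b \<and> c = d then (if a = c then - inverse vv else -1)
      else if c = b \<and> d = a \<and> b < a then vv - inverse vv
      else 0)"

text \<open>Generators: tp i j r = t^+_{ij}[r] and tm i j r = t^-_{ij}[-r] (r :: nat).
  ser tp tm s i j p is the coefficient of z^p (p :: int) in t^s_{ij}(z),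
  where s = True means sign + and s = False means sign -.\<close>
definition ser :: "(nat \<Rightarrow> nat \<Rightarrow> nat \<Rightarrow> 'a::zero) \<Rightarrow> (nat \<Rightarrow> nat \<Rightarrow> nat \<Rightarrow> 'a)
                   \<Rightarrow> bool \<Rightarrow> nat \<Rightarrow> nat \<Rightarrow> int \<Rightarrow> 'a" where
  "ser tp tm s i j p =
     (if s then (if p \<le> 0 then tp i j (nat (- p)) else 0)
           else (if 0 \<le> p then tm i j (nat p) else 0))"

text \<open>The RTT relation R(z,w) T^s_1(z) T^s'_2(w) = T^s'_2(w) T^s_1(z) R(z,w),
  written out on the matrix entry with row (a,c) and column (b,d) (the coefficient of
  E_ab (x) E_cd) and on the coefficient of the monomial z^p w^q.\<close>
definition RTT_rel :: "(Cv \<Rightarrow> 'a::ring_1) \<Rightarrow> nat \<Rightarrow> (nat \<Rightarrow> nat \<Rightarrow> nat \<Rightarrow> 'a)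
      \<Rightarrow> (nat \<Rightarrow> nat \<Rightarrow> nat \<Rightarrow> 'a) \<Rightarrow> bool \<Rightarrow> bool \<Rightarrow> bool" where
  "RTT_rel sc n tp tm s s' \<longleftrightarrow>
     (\<forall>a\<in>{1..n}. \<forall>b\<in>{1..n}. \<forall>c\<in>{1..n}. \<forall>d\<in>{1..n}. \<forall>p q :: int.
        (\<Sum>x\<in>{1..n}. \<Sum>y\<in>{1..n}.
            sc (Rz a x c y) * ser tp tm s x b (p - 1) * ser tp tm s' y d q
          + sc (Rw a x c y) * ser tp tm s x b p * ser tp tm s' y d (q - 1))
      = (\<Sum>x\<in>{1..n}. \<Sum>y\<in>{1..n}.
            ser tp tm s' c y q * ser tp tm s a x (p - 1) * sc (Rz x b y d)
          + ser tp tm s' c y (q - 1) * ser tp tm s a x p * sc (Rw x b y d)))"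

definition RTT_relations :: "(Cv \<Rightarrow> 'a::ring_1) \<Rightarrow> nat \<Rightarrow> (nat \<Rightarrow> nat \<Rightarrow> nat \<Rightarrow> 'a)
      \<Rightarrow> (nat \<Rightarrow> nat \<Rightarrow> nat \<Rightarrow> 'a) \<Rightarrow> bool" where
  "RTT_relations sc n tp tm \<longleftrightarrow>
     (\<forall>i\<in>{1..n}. tp i i 0 * tm i i 0 = 1 \<and> tm i i 0 * tp i i 0 = 1)
   \<and> (\<forall>i\<in>{1..n}. \<forall>j\<in>{1..n}. j < i \<longrightarrow> tp i j 0 = 0 \<and> tm j i 0 = 0)
   \<and> RTT_rel sc n tp tm True True
   \<and> RTT_rel sc n tp tm False False
   \<and> RTT_rel sc n tp tm False True"

text \<open>Coefficients: e i j r = e~^{(r)}_{ij} (r :: int; r >= 0 from e~^+, r < 0 from e~^-),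
  f i j r = f~^{(r)}_{ij} (r > 0 from f~^+, r <= 0 from f~^-),
  gp i r = coefficient of z^{-r} in g~^+_i(z), gm i r = coefficient of z^r in g~^-_i(z).
  Sign +: power series in X = z^{-1}; sign -: power series in X = z.\<close>

definition Tps :: "(nat \<Rightarrow> nat \<Rightarrow> nat \<Rightarrow> 'a::ring_1) \<Rightarrow> nat \<Rightarrow> nat \<Rightarrow> 'a fps" where
  "Tps t a b = Abs_fps (t a b)"

definition Fp :: "(nat \<Rightarrow> nat \<Rightarrow> int \<Rightarrow> 'a::ring_1) \<Rightarrow> nat \<Rightarrow> nat \<Rightarrow> 'a fps" where
  "Fp f a b = (if a = b then 1 else if b < a
                 then Abs_fps (\<lambda>r. if r = 0 then 0 else f a b (int r)) else 0)"
definition Gp :: "(nat \<Rightarrow> nat \<Rightarrow> 'a::ring_1) \<Rightarrow> nat \<Rightarrow> nat \<Rightarrow> 'a fps" where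
  "Gp g a b = (if a = b then Abs_fps (g a) else 0)"
definition Ep :: "(nat \<Rightarrow> nat \<Rightarrow> int \<Rightarrow> 'a::ring_1) \<Rightarrow> nat \<Rightarrow> nat \<Rightarrow> 'a fps" where
  "Ep e a b = (if a = b then 1 else if a < b then Abs_fps (\<lambda>r. e a b (int r)) else 0)"

definition Fm :: "(nat \<Rightarrow> nat \<Rightarrow> int \<Rightarrow> 'a::ring_1) \<Rightarrow> nat \<Rightarrow> nat \<Rightarrow> 'a fps" where
  "Fm f a b = (if a = b then 1 else if b < a
                 then Abs_fps (\<lambda>s. f a b (- int s)) else 0)"
definition Em :: "(nat \<Rightarrow> nat \<Rightarrow> int \<Rightarrow> 'a::ring_1) \<Rightarrow> nat \<Rightarrow> nat \<Rightarrow> 'a fps" where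
  "Em e a b = (if a = b then 1 else if a < b
                 then Abs_fps (\<lambda>s. if s = 0 then 0 else e a b (- int s)) else 0)"

definition gauss :: "nat \<Rightarrow> (nat \<Rightarrow> nat \<Rightarrow> 'a::ring_1 fps) \<Rightarrow> (nat \<Rightarrow> nat \<Rightarrow> 'a fps)
      \<Rightarrow> (nat \<Rightarrow> nat \<Rightarrow> 'a fps) \<Rightarrow> (nat \<Rightarrow> nat \<Rightarrow> 'a fps) \<Rightarrow> bool" where
  "gauss n T F G E \<longleftrightarrow>
     (\<forall>a\<in>{1..n}. \<forall>b\<in>{1..n}. T a b = (\<Sum>k\<in>{1..n}. \<Sum>l\<in>{1..n}. F a k * G k l * E l b))"

definition gauss_decomp :: "nat \<Rightarrow> (nat \<Rightarrow> nat \<Rightarrow> nat \<Rightarrow> 'a::ring_1) \<Rightarrow> (nat \<Rightarrow> nat \<Rightarrow> nat \<Rightarrow> 'a)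
      \<Rightarrow> (nat \<Rightarrow> nat \<Rightarrow> int \<Rightarrow> 'a) \<Rightarrow> (nat \<Rightarrow> nat \<Rightarrow> 'a) \<Rightarrow> (nat \<Rightarrow> nat \<Rightarrow> 'a)
      \<Rightarrow> (nat \<Rightarrow> nat \<Rightarrow> int \<Rightarrow> 'a) \<Rightarrow> bool" where
  "gauss_decomp n tp tm f gp gm e \<longleftrightarrow>
     gauss n (Tps tp) (Fp f) (Gp gp) (Ep e) \<and> gauss n (Tps tm) (Fm f) (Gp gm) (Em e)"

end

(* Write y = t^+_{ii}[0] and x = t^+_{i,i+1}[0]. Reading off the coefficient of the
   highest power of w in the RTT relation with T^+(w) on the right shows that every row a < i
   of T^+(z) and of T^-(z) satisfies
     y t_{ab}(z) = v^{delta_{bi}} t_{ab}(z) y,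
     x t_{ab}(z) = v^{delta_{b,i+1}} t_{ab}(z) x + delta_{bi} (v - v^{-1}) y t_{a,i+1}(z).
   These relations survive left multiplication by anything commuting with x and y. In the
   Gauss decomposition T = F G E the matrix F is lower unitriangular, so row a of E is
   g_a^{-1} (row a of T - sum_{k<a} f_{ak} g_k (row k of E)); by induction on a every row
   a < i of E satisfies the same relations, once one knows that the entries of F and G in the
   leading (i-1) x (i-1) block commute with x and y (they are computed from the corresponding
   block of T, whose entries commute with x and y). For a = j the second relation with b = i
   reads x e_{ji} = e_{ji} x + (v - v^{-1}) y e_{j,i+1}, and since x = y e^{(0)}_{i,i+1} this
   solves to the stated v^{-1}-commutator. The formula for f is the mirror image: columns
   instead of rows, t^-_{ii}[0] and t^-_{i+1,i}[0], the lowest power of z in the RTT relation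
   with T^-(z) on the left, and right multiplication. *)

theory Submission
  imports Defs
begin

unbundle fps_syntax

section \<open>Commutants\<close>

definition commutant :: "'a::ring_1 set \<Rightarrow> 'a set" where
  "commutant A = {s. \<forall>a\<in>A. a * s = s * a}"

lemma commutant_zero [simp]: "0 \<in> commutant A"
  and commutant_one [simp]: "1 \<in> commutant A"
  by (simp_all add: commutant_def)

lemma commutant_add: "s \<in> commutant A \<Longrightarrow> t \<in> commutant A \<Longrightarrow> s + t \<in> commutant A"
  by (simp add: commutant_def algebra_simps)

lemma commutant_diff: "s \<in> commutant A \<Longrightarrow> t \<in> commutant A \<Longrightarrow> s - t \<in> commutant A"
  by (simp add: commutant_def algebra_simps)

lemma commutant_mult: "s \<in> commutant A \<Longrightarrow> t \<in> commutant A \<Longrightarrow> s * t \<in> commutant A"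
  by (simp add: commutant_def) (metis mult.assoc)

lemma commutant_sum: "(\<And>k. k \<in> K \<Longrightarrow> s k \<in> commutant A) \<Longrightarrow> (\<Sum>k\<in>K. s k) \<in> commutant A"
  by (induction K rule: infinite_finite_induct) (auto intro: commutant_add)

lemma commutant_inverse:
  assumes "g \<in> commutant A" "g * u = 1" "u * g = 1"
  shows "u \<in> commutant A"
  unfolding commutant_def
proof (intro CollectI ballI)
  fix a assume "a \<in> A"
  then have ga: "g * a = a * g" using assms(1) by (simp add: commutant_def)
  have "a * u = u * g * a * u" using assms(3) by simp
  also have "\<dots> = u * (g * a) * u" by (simp add: mult.assoc)
  also have "\<dots> = u * a * (g * u)" by (simp add: ga mult.assoc)
  finally show "a * u = u * a" using assms(2) by simp
qed

lemma fps_const_commutant_UNIV: "c \<in> commutant UNIV \<Longrightarrow> fps_const c \<in> commutant UNIV"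
  by (auto simp: commutant_def fps_eq_iff fps_mult_left_const_nth fps_mult_right_const_nth)

section \<open>The shift relation\<close>

text \<open>In the application, y and x are t^+_{ii}[0] and t^+_{i,i+1}[0] acting on a row a < i of
  T or E, or t^-_{ii}[0] and t^-_{i+1,i}[0] acting on a column d < i of T or F; V = v and
  K = v - v^{-1}.\<close>
definition shift_rel :: "'a::ring_1 \<Rightarrow> 'a \<Rightarrow> 'a \<Rightarrow> 'a \<Rightarrow> nat \<Rightarrow> nat \<Rightarrow> (nat \<Rightarrow> 'a) \<Rightarrow> bool" where
  "shift_rel x y V K i n R \<longleftrightarrow> (\<forall>b\<in>{1..n}.
     y * R b = (if b = i then V else 1) * R b * y \<and>
     x * R b = (if b = Suc i then V else 1) * R b * x + (if b = i then K * y * R (Suc i) else 0))"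

lemma shift_rel_cong:
  "shift_rel x y V K i n R \<Longrightarrow> Suc i \<in> {1..n} \<Longrightarrow> (\<And>b. b \<in> {1..n} \<Longrightarrow> R b = R' b)
   \<Longrightarrow> shift_rel x y V K i n R'"
  unfolding shift_rel_def by auto

lemma shift_rel_add:
  "shift_rel x y V K i n R \<Longrightarrow> shift_rel x y V K i n S \<Longrightarrow> shift_rel x y V K i n (\<lambda>b. R b + S b)"
  unfolding shift_rel_def by (simp add: distrib_left distrib_right)

lemma shift_rel_diff:
  "shift_rel x y V K i n R \<Longrightarrow> shift_rel x y V K i n S \<Longrightarrow> shift_rel x y V K i n (\<lambda>b. R b - S b)"
  unfolding shift_rel_def by (simp add: left_diff_distrib right_diff_distrib)

lemma shift_rel_zero: "shift_rel x y V K i n (\<lambda>b. 0)"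
  by (simp add: shift_rel_def)

lemma shift_rel_sum:
  "(\<And>k. k \<in> A \<Longrightarrow> shift_rel x y V K i n (R k)) \<Longrightarrow> shift_rel x y V K i n (\<lambda>b. \<Sum>k\<in>A. R k b)"
proof (induction A rule: infinite_finite_induct)
  case (insert a A)
  then have "shift_rel x y V K i n (\<lambda>b. R a b + (\<Sum>k\<in>A. R k b))"
    by (intro shift_rel_add) auto
  with insert.hyps show ?case by simp
qed (simp_all add: shift_rel_zero)

lemma shift_rel_mult_left:
  assumes R: "shift_rel x y V K i n R" and c: "c \<in> commutant {x, y}"
    and V: "V \<in> commutant UNIV" and K: "K \<in> commutant UNIV"
  shows "shift_rel x y V K i n (\<lambda>b. c * R b)"
  unfolding shift_rel_def
proof
  fix b assume "b \<in> {1..n}"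
  define w u where "w = (if b = i then V else 1)" and "u = (if b = Suc i then V else 1)"
  have Rb: "y * R b = w * R b * y" "x * R b = u * R b * x + (if b = i then K * y * R (Suc i) else 0)"
    using R \<open>b \<in> {1..n}\<close> unfolding shift_rel_def w_def u_def by auto
  have xc: "x * c = c * x" and yc: "y * c = c * y" using c by (auto simp: commutant_def)
  have wc: "c * w = w * c" and uc: "c * u = u * c" and Kc: "K * c = c * K"
    using V K by (auto simp: commutant_def w_def u_def)
  have "y * (c * R b) = c * (y * R b)" by (simp add: yc mult.assoc[symmetric])
  also have "\<dots> = (c * w) * R b * y" by (simp add: Rb(1) mult.assoc)
  finally have 1: "y * (c * R b) = w * (c * R b) * y" by (simp add: wc mult.assoc)
  have "x * (c * R b) = c * (x * R b)" by (simp add: xc mult.assoc[symmetric])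
  also have "\<dots> = (c * u) * R b * x + (if b = i then (K * c) * y * R (Suc i) else 0)"
    by (simp add: Rb(2) Kc distrib_left mult.assoc)
  also have "\<dots> = u * (c * R b) * x + (if b = i then K * (c * y) * R (Suc i) else 0)"
    by (simp add: uc mult.assoc)
  also have "\<dots> = u * (c * R b) * x + (if b = i then K * y * (c * R (Suc i)) else 0)"
    by (simp add: yc[symmetric] mult.assoc)
  finally show "y * (c * R b) = w * (c * R b) * y \<and>
      x * (c * R b) = u * (c * R b) * x + (if b = i then K * y * (c * R (Suc i)) else 0)"
    using 1 by simp
qed

lemma shift_rel_mult_right:
  assumes R: "shift_rel x y V K i n R" and c: "c \<in> commutant {x, y}"
  shows "shift_rel x y V K i n (\<lambda>b. R b * c)"
  unfolding shift_rel_def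
proof
  fix b assume "b \<in> {1..n}"
  define w u where "w = (if b = i then V else 1)" and "u = (if b = Suc i then V else 1)"
  have Rb: "y * R b = w * R b * y" "x * R b = u * R b * x + (if b = i then K * y * R (Suc i) else 0)"
    using R \<open>b \<in> {1..n}\<close> unfolding shift_rel_def w_def u_def by auto
  have xc: "x * c = c * x" and yc: "y * c = c * y" using c by (auto simp: commutant_def)
  have "y * (R b * c) = w * R b * (y * c)" by (simp add: Rb(1) mult.assoc[symmetric])
  then have 1: "y * (R b * c) = w * (R b * c) * y" by (simp add: yc mult.assoc)
  have "x * (R b * c) = (u * R b * x + (if b = i then K * y * R (Suc i) else 0)) * c"
    by (simp add: Rb(2) mult.assoc[symmetric])
  then have 2: "x * (R b * c) = u * (R b * c) * x + (if b = i then K * y * (R (Suc i) * c) else 0)"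
    by (simp add: distrib_right xc mult.assoc)
  show "y * (R b * c) = w * (R b * c) * y \<and>
      x * (R b * c) = u * (R b * c) * x + (if b = i then K * y * (R (Suc i) * c) else 0)"
    using 1 2 by simp
qed

lemma shift_rel_commutant:
  "shift_rel x y V K i n R \<Longrightarrow> b \<in> {1..n} \<Longrightarrow> b \<noteq> i \<Longrightarrow> b \<noteq> Suc i \<Longrightarrow> R b \<in> commutant {x, y}"
  unfolding shift_rel_def commutant_def by auto

lemma shift_rel_fps_const_iff:
  "shift_rel (fps_const x) (fps_const y) (fps_const V) (fps_const K) i n R
     \<longleftrightarrow> (\<forall>m. shift_rel x y V K i n (\<lambda>b. R b $ m))"
  unfolding shift_rel_def fps_eq_iff
  by (auto simp: fps_mult_left_const_nth fps_mult_right_const_nth)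

section \<open>LDU factorizations\<close>

locale ldu_decomp =
  fixes n :: nat and T F :: "nat \<Rightarrow> nat \<Rightarrow> 'a::ring_1" and G :: "nat \<Rightarrow> 'a"
    and E :: "nat \<Rightarrow> nat \<Rightarrow> 'a"
  assumes factorization: "a \<in> {1..n} \<Longrightarrow> b \<in> {1..n} \<Longrightarrow> T a b = (\<Sum>k\<in>{1..n}. F a k * G k * E k b)"
    and F_diag: "F a a = 1" and F_upper: "a < k \<Longrightarrow> F a k = 0"
    and E_diag: "E k k = 1" and E_lower: "b < k \<Longrightarrow> E k b = 0"
    and G_unit: "k \<in> {1..n} \<Longrightarrow> \<exists>u. G k * u = 1 \<and> u * G k = 1"
begin

lemma row_split:
  assumes "a \<in> {1..n}" "b \<in> {1..n}"
  shows "T a b = G a * E a b + (\<Sum>k=1..<a. F a k * G k * E k b)"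
proof -
  have "T a b = (\<Sum>k\<in>insert a {1..<a}. F a k * G k * E k b)"
    unfolding factorization[OF assms]
    by (rule sum.mono_neutral_right) (use assms in \<open>auto simp: F_upper not_less le_less\<close>)
  then show ?thesis by (simp add: F_diag)
qed

lemma col_split:
  assumes "a \<in> {1..n}" "b \<in> {1..n}"
  shows "T a b = F a b * G b + (\<Sum>k=1..<b. F a k * G k * E k b)"
proof -
  have "T a b = (\<Sum>k\<in>insert b {1..<b}. F a k * G k * E k b)"
    unfolding factorization[OF assms]
    by (rule sum.mono_neutral_right) (use assms in \<open>auto simp: E_lower not_less le_less\<close>)
  then show ?thesis by (simp add: E_diag)
qed

lemma G_inverse_commutant:
  assumes "k \<in> {1..n}" "G k \<in> commutant A"
  obtains u where "G k * u = 1" "u * G k = 1" "u \<in> commutant A"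
  using G_unit[OF assms(1)] commutant_inverse[OF assms(2)] by blast

text \<open>Induction on \<open>a + b\<close>: the \<open>(a, b)\<close> entry of \<open>T = F G E\<close> is its leading term
  \<open>F a b * G b\<close>, \<open>G a\<close> or \<open>G a * E a b\<close> plus products of entries of the factors with smaller
  index sum.\<close>
lemma factors_commutant:
  assumes T: "\<And>a b. a \<in> {1..n} \<Longrightarrow> b \<in> {1..n} \<Longrightarrow> a < m \<Longrightarrow> b < m \<Longrightarrow> T a b \<in> commutant A"
  shows "a \<in> {1..n} \<Longrightarrow> b \<in> {1..n} \<Longrightarrow> a < m \<Longrightarrow> b < m
    \<Longrightarrow> F a b \<in> commutant A \<and> G (min a b) \<in> commutant A \<and> E a b \<in> commutant A"
proof (induction "a + b" arbitrary: a b rule: less_induct)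
  case less
  have lower: "(\<Sum>k=1..<min a b. F a k * G k * E k b) \<in> commutant A"
  proof (intro commutant_sum commutant_mult)
    fix k assume "k \<in> {1..<min a b}"
    then have k: "k < a" "k < b" "k \<in> {1..n}" "k < m" using less.prems by auto
    show "F a k \<in> commutant A" "G k \<in> commutant A"
      using less.hyps[of a k] less.prems k by (auto simp: min_def)
    show "E k b \<in> commutant A"
      using less.hyps[of k b] less.prems k by auto
  qed
  consider "a = b" | "a < b" | "b < a" by linarith
  then show ?case
  proof cases
    case 1
    have "G a = T a a - (\<Sum>k=1..<a. F a k * G k * E k a)"
      using row_split[of a a] less.prems 1 by (simp add: E_diag)
    then show ?thesis using 1 lower T less.prems by (simp add: F_diag E_diag commutant_diff)
  next
    case 2
    have Ga: "G a \<in> commutant A" using less.hyps[of a a] less.prems 2 by simp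
    then obtain u where u: "u * G a = 1" "u \<in> commutant A"
      using G_inverse_commutant less.prems by metis
    have "G a * E a b = T a b - (\<Sum>k=1..<a. F a k * G k * E k b)"
      using row_split[of a b] less.prems by simp
    then have "G a * E a b \<in> commutant A" using 2 lower T less.prems by (simp add: commutant_diff)
    then have "u * (G a * E a b) \<in> commutant A" by (rule commutant_mult[OF u(2)])
    then show ?thesis using 2 Ga u(1) by (simp add: F_upper mult.assoc[symmetric])
  next
    case 3
    have Gb: "G b \<in> commutant A" using less.hyps[of b b] less.prems 3 by simp
    then obtain u where u: "G b * u = 1" "u \<in> commutant A"
      using G_inverse_commutant less.prems by metis
    have "F a b * G b = T a b - (\<Sum>k=1..<b. F a k * G k * E k b)"
      using col_split[of a b] less.prems by simp
    then have "F a b * G b \<in> commutant A" using 3 lower T less.prems by (simp add: commutant_diff)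
    then have "F a b * G b * u \<in> commutant A" using u(2) by (rule commutant_mult)
    then show ?thesis using 3 Gb u(1) by (simp add: E_lower mult.assoc)
  qed
qed

lemma E_rows_shift_rel:
  assumes rows: "\<And>a. a \<in> {1..n} \<Longrightarrow> a < i \<Longrightarrow> shift_rel x y V K i n (T a)"
    and V: "V \<in> commutant UNIV" and K: "K \<in> commutant UNIV" and "i < n"
  shows "a \<in> {1..n} \<Longrightarrow> a < i \<Longrightarrow> shift_rel x y V K i n (E a)"
proof (induction a rule: less_induct)
  case (less a)
  have block: "F a' b \<in> commutant {x, y} \<and> G (min a' b) \<in> commutant {x, y}"
    if "a' \<in> {1..n}" "b \<in> {1..n}" "a' < i" "b < i" for a' b
    using factors_commutant[of i "{x, y}", OF shift_rel_commutant[OF rows]] that by auto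
  have lower: "shift_rel x y V K i n (\<lambda>b. \<Sum>k=1..<a. F a k * G k * E k b)"
  proof (rule shift_rel_sum)
    fix k assume "k \<in> {1..<a}"
    then have k: "k < a" "k \<in> {1..n}" "k < i" using less.prems by auto
    have "F a k * G k \<in> commutant {x, y}"
      using block[of a k] k less.prems by (simp add: commutant_mult)
    then show "shift_rel x y V K i n (\<lambda>b. F a k * G k * E k b)"
      using shift_rel_mult_left[OF less.IH[OF k] _ V K] by simp
  qed
  have "shift_rel x y V K i n (\<lambda>b. G a * E a b)"
    using shift_rel_diff[OF rows[OF less.prems] lower]
    by (rule shift_rel_cong) (use \<open>i < n\<close> less.prems row_split in auto)
  moreover have "G a \<in> commutant {x, y}" using block[of a a] less.prems by simp
  then obtain u where "u * G a = 1" "u \<in> commutant {x, y}"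
    using G_inverse_commutant less.prems(1) by blast
  ultimately have "shift_rel x y V K i n (\<lambda>b. u * (G a * E a b))"
    using shift_rel_mult_left V K by blast
  then show ?case
    by (rule shift_rel_cong) (use \<open>i < n\<close> \<open>u * G a = 1\<close> in \<open>auto simp: mult.assoc[symmetric]\<close>)
qed

lemma F_columns_shift_rel:
  assumes cols: "\<And>d. d \<in> {1..n} \<Longrightarrow> d < i \<Longrightarrow> shift_rel x y V K i n (\<lambda>c. T c d)"
    and "i < n"
  shows "d \<in> {1..n} \<Longrightarrow> d < i \<Longrightarrow> shift_rel x y V K i n (\<lambda>c. F c d)"
proof (induction d rule: less_induct)
  case (less d)
  have block: "G (min a b) \<in> commutant {x, y} \<and> E a b \<in> commutant {x, y}"
    if "a \<in> {1..n}" "b \<in> {1..n}" "a < i" "b < i" for a b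
    using factors_commutant[of i "{x, y}", OF shift_rel_commutant[OF cols]] that by auto
  have lower: "shift_rel x y V K i n (\<lambda>c. \<Sum>l=1..<d. F c l * G l * E l d)"
  proof (rule shift_rel_sum)
    fix l assume "l \<in> {1..<d}"
    then have l: "l < d" "l \<in> {1..n}" "l < i" using less.prems by auto
    have "G l * E l d \<in> commutant {x, y}"
      using block[of l d] l less.prems by (simp add: commutant_mult)
    then show "shift_rel x y V K i n (\<lambda>c. F c l * G l * E l d)"
      using shift_rel_mult_right[OF less.IH[OF l]] by (simp add: mult.assoc)
  qed
  have "shift_rel x y V K i n (\<lambda>c. F c d * G d)"
    using shift_rel_diff[OF cols[OF less.prems] lower]
    by (rule shift_rel_cong) (use \<open>i < n\<close> less.prems col_split in auto)
  moreover have "G d \<in> commutant {x, y}" using block[of d d] less.prems by simp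
  then obtain u where "G d * u = 1" "u \<in> commutant {x, y}"
    using G_inverse_commutant less.prems(1) by blast
  ultimately have "shift_rel x y V K i n (\<lambda>c. F c d * G d * u)"
    using shift_rel_mult_right by blast
  then show ?case
    by (rule shift_rel_cong) (use \<open>i < n\<close> \<open>G d * u = 1\<close> in \<open>auto simp: mult.assoc\<close>)
qed

end

section \<open>The RTT relations\<close>

lemma vv_nonzero: "vv \<noteq> 0"
  by (simp add: vv_def eq_fract Zero_fract_def)

lemma vv_square_ne_one: "vv * vv \<noteq> 1"
proof
  assume "vv * vv = 1"
  then have "[:0, 1:] * [:0, 1:] = (1 :: complex poly)"
    by (simp add: vv_def One_fract_def eq_fract)
  then have "poly ([:0, 1:] * [:0, 1:]) 0 = poly (1 :: complex poly) 0" by (rule arg_cong)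
  then show False by simp
qed

lemma vv_diff_inverse_nonzero: "vv - inverse vv \<noteq> 0"
proof
  assume "vv - inverse vv = 0"
  then have "vv * vv = inverse vv * vv" by simp
  then show False using vv_square_ne_one vv_nonzero by simp
qed

lemma Cv_algebra_hom:
  assumes "Cv_algebra sc"
  shows "sc 0 = 0" "sc 1 = 1" "sc (a + b) = sc a + sc b" "sc (- a) = - sc a"
    "sc (a * b) = sc a * sc b"
proof -
  have add: "sc (a + b) = sc a + sc b" for a b using assms unfolding Cv_algebra_def by blast
  show "sc 0 = 0" using add[of 0 0] by simp
  then have "sc a + sc (- a) = 0" using add[of a "- a"] by simp
  then show "sc (- a) = - sc a" by (rule add.inverse_unique[symmetric])
  show "sc 1 = 1" "sc (a + b) = sc a + sc b" "sc (a * b) = sc a * sc b"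
    using assms unfolding Cv_algebra_def by blast+
qed

lemma Cv_algebra_commute: "Cv_algebra sc \<Longrightarrow> sc a * z = z * sc a"
  unfolding Cv_algebra_def by blast

lemma Cv_algebra_inverse:
  assumes "Cv_algebra sc" "a \<noteq> 0"
  shows "sc (inverse a) * sc a = 1" "sc a * sc (inverse a) = 1"
  using Cv_algebra_hom(2,5)[OF assms(1)] assms(2) by (metis left_inverse, metis right_inverse)

lemma Cv_algebra_if_neg:
  "Cv_algebra sc \<Longrightarrow> sc (if P then - inverse vv else -1) = - sc (if P then inverse vv else 1)"
  using Cv_algebra_hom(2,4)[of sc] by auto

lemma RTT_relD:
  assumes "RTT_rel sc n tp tm s s'" "a \<in> {1..n}" "b \<in> {1..n}" "c \<in> {1..n}" "d \<in> {1..n}"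
  shows "(\<Sum>x\<in>{1..n}. \<Sum>y\<in>{1..n}.
            sc (Rz a x c y) * ser tp tm s x b (p - 1) * ser tp tm s' y d q
          + sc (Rw a x c y) * ser tp tm s x b p * ser tp tm s' y d (q - 1))
      = (\<Sum>x\<in>{1..n}. \<Sum>y\<in>{1..n}.
            ser tp tm s' c y q * ser tp tm s a x (p - 1) * sc (Rz x b y d)
          + ser tp tm s' c y (q - 1) * ser tp tm s a x p * sc (Rw x b y d))"
  using assms unfolding RTT_rel_def by blast

lemma Rw_double_sum_left:
  fixes A B :: "nat \<Rightarrow> 'a::ring_1"
  assumes "Cv_algebra sc" "a \<in> {1..n}" "c \<in> {1..n}"
  shows "(\<Sum>x\<in>{1..n}. \<Sum>y\<in>{1..n}. sc (Rw a x c y) * A x * B y)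
     = sc (if a = c then - inverse vv else -1) * A a * B c
       + (if c < a then sc (vv - inverse vv) * A c * B a else 0)"
proof -
  have "(\<Sum>x\<in>{1..n}. \<Sum>y\<in>{1..n}. sc (Rw a x c y) * A x * B y)
     = (\<Sum>x\<in>{1..n}. \<Sum>y\<in>{1..n}.
          (if y = c then (if x = a then sc (if a = c then - inverse vv else -1) * A a * B c else 0) else 0)
        + (if y = a then (if x = c then (if c < a then sc (vv - inverse vv) * A c * B a else 0) else 0) else 0))"
    by (intro sum.cong refl) (auto simp: Rw_def Cv_algebra_hom(1)[OF assms(1)])
  also have "\<dots> = sc (if a = c then - inverse vv else -1) * A a * B c
       + (if c < a then sc (vv - inverse vv) * A c * B a else 0)"
    using assms(2,3) by (simp only: sum.distrib sum.delta finite_atLeastAtMost if_True)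
  finally show ?thesis .
qed

lemma Rw_double_sum_right:
  fixes A B :: "nat \<Rightarrow> 'a::ring_1"
  assumes "Cv_algebra sc" "b \<in> {1..n}" "d \<in> {1..n}"
  shows "(\<Sum>x\<in>{1..n}. \<Sum>y\<in>{1..n}. A y * B x * sc (Rw x b y d))
     = A d * B b * sc (if b = d then - inverse vv else -1)
       + (if b < d then A b * B d * sc (vv - inverse vv) else 0)"
proof -
  have "(\<Sum>x\<in>{1..n}. \<Sum>y\<in>{1..n}. A y * B x * sc (Rw x b y d))
     = (\<Sum>x\<in>{1..n}. \<Sum>y\<in>{1..n}.
          (if y = d then (if x = b then A d * B b * sc (if b = d then - inverse vv else -1) else 0) else 0)
        + (if y = b then (if x = d then (if b < d then A b * B d * sc (vv - inverse vv) else 0) else 0) else 0))"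
    by (intro sum.cong refl) (auto simp: Rw_def Cv_algebra_hom(1)[OF assms(1)])
  also have "\<dots> = A d * B b * sc (if b = d then - inverse vv else -1)
       + (if b < d then A b * B d * sc (vv - inverse vv) else 0)"
    using assms(2,3) by (simp only: sum.distrib sum.delta finite_atLeastAtMost if_True)
  finally show ?thesis .
qed

text \<open>\<open>T\<^sup>+(w)\<close> has no positive powers of \<open>w\<close>, so in the coefficient of \<open>z\<^sup>p w\<close> only its
  constant term and the \<open>w\<close>-part of the R-matrix survive.\<close>
lemma RTT_rel_plus_top_coeff:
  assumes sc: "Cv_algebra sc" and R: "RTT_rel sc n tp tm s True"
    and abcd: "a \<in> {1..n}" "b \<in> {1..n}" "c \<in> {1..n}" "d \<in> {1..n}"
  shows "sc (if a = c then - inverse vv else -1) * ser tp tm s a b p * tp c d 0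
           + (if c < a then sc (vv - inverse vv) * ser tp tm s c b p * tp a d 0 else 0)
       = tp c d 0 * ser tp tm s a b p * sc (if b = d then - inverse vv else -1)
           + (if b < d then tp c b 0 * ser tp tm s a d p * sc (vv - inverse vv) else 0)"
proof -
  have "(\<Sum>x\<in>{1..n}. \<Sum>y\<in>{1..n}. sc (Rw a x c y) * ser tp tm s x b p * tp y d 0)
      = (\<Sum>x\<in>{1..n}. \<Sum>y\<in>{1..n}. tp c y 0 * ser tp tm s a x p * sc (Rw x b y d))"
    using RTT_relD[OF R abcd, of p 1] by (simp add: ser_def[of tp tm True])
  then show ?thesis
    using Rw_double_sum_left[OF sc abcd(1,3), of "\<lambda>x. ser tp tm s x b p" "\<lambda>y. tp y d 0"]
      Rw_double_sum_right[OF sc abcd(2,4), of "\<lambda>y. tp c y 0" "\<lambda>x. ser tp tm s a x p"]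
    by simp
qed

text \<open>Dually, in the coefficient of \<open>z\<^sup>0 w\<^sup>q\<^sup>+\<^sup>1\<close> only the constant term of \<open>T\<^sup>-(z)\<close> survives.\<close>
lemma RTT_rel_minus_bottom_coeff:
  assumes sc: "Cv_algebra sc" and R: "RTT_rel sc n tp tm False s"
    and abcd: "a \<in> {1..n}" "b \<in> {1..n}" "c \<in> {1..n}" "d \<in> {1..n}"
  shows "sc (if a = c then - inverse vv else -1) * tm a b 0 * ser tp tm s c d q
           + (if c < a then sc (vv - inverse vv) * tm c b 0 * ser tp tm s a d q else 0)
       = ser tp tm s c d q * tm a b 0 * sc (if b = d then - inverse vv else -1)
           + (if b < d then ser tp tm s c b q * tm a d 0 * sc (vv - inverse vv) else 0)"
proof -
  have "(\<Sum>x\<in>{1..n}. \<Sum>y\<in>{1..n}. sc (Rw a x c y) * tm x b 0 * ser tp tm s y d q)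
      = (\<Sum>x\<in>{1..n}. \<Sum>y\<in>{1..n}. ser tp tm s c y q * tm a x 0 * sc (Rw x b y d))"
    using RTT_relD[OF R abcd, of 0 "q + 1"] by (simp add: ser_def[of tp tm False])
  then show ?thesis
    using Rw_double_sum_left[OF sc abcd(1,3), of "\<lambda>x. tm x b 0" "\<lambda>y. ser tp tm s y d q"]
      Rw_double_sum_right[OF sc abcd(2,4), of "\<lambda>y. ser tp tm s c y q" "\<lambda>x. tm a x 0"]
    by simp
qed

lemma Cv_algebra_twist:
  assumes sc: "Cv_algebra sc" and "s * y = sc (inverse vv) * (y * s)"
  shows "y * s = sc vv * s * y"
proof -
  have "sc vv * s * y = sc vv * sc (inverse vv) * (y * s)" using assms(2) by (simp add: mult.assoc)
  then show ?thesis using Cv_algebra_inverse(2)[OF sc vv_nonzero] by simp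
qed

lemma shift_rel_of_reversed_products:
  assumes sc: "Cv_algebra sc"
    and Y: "\<And>b. b \<in> {1..n} \<Longrightarrow> S b * y = sc (if b = i then inverse vv else 1) * (y * S b)"
    and X: "\<And>b. b \<in> {1..n} \<Longrightarrow> S b * x = sc (if b = Suc i then inverse vv else 1) * (x * S b)
                                  - (if b = i then sc k * y * S (Suc i) else 0)"
  shows "shift_rel x y (sc vv) (sc k) i n S"
  unfolding shift_rel_def
proof (intro ballI conjI)
  fix b assume b: "b \<in> {1..n}"
  note one = Cv_algebra_hom(2)[OF sc]
  show "y * S b = (if b = i then sc vv else 1) * S b * y"
    using Y[OF b] Cv_algebra_twist[OF sc, of "S b" y] by (cases "b = i") (simp_all add: one)
  show "x * S b = (if b = Suc i then sc vv else 1) * S b * x + (if b = i then sc k * y * S (Suc i) else 0)"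
    using X[OF b] Cv_algebra_twist[OF sc, of "S b" x] by (cases "b = i"; cases "b = Suc i") (simp_all add: one)
qed

lemma RTT_rel_row_shift_rel:
  assumes sc: "Cv_algebra sc" and R: "RTT_rel sc n tp tm s True"
    and Z: "\<And>b. b \<in> {1..n} \<Longrightarrow> b < i \<Longrightarrow> tp i b 0 = 0"
    and a: "a \<in> {1..n}" "a < i" and "i < n"
  shows "shift_rel (tp i (Suc i) 0) (tp i i 0) (sc vv) (sc (vv - inverse vv)) i n (\<lambda>b. ser tp tm s a b p)"
proof (rule shift_rel_of_reversed_products[OF sc])
  fix b assume b: "b \<in> {1..n}"
  have i: "i \<in> {1..n}" "Suc i \<in> {1..n}" using a \<open>i < n\<close> by auto
  note simps = Cv_algebra_hom[OF sc] Cv_algebra_if_neg[OF sc] Cv_algebra_commute[OF sc, symmetric]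
  show "ser tp tm s a b p * tp i i 0
      = sc (if b = i then inverse vv else 1) * (tp i i 0 * ser tp tm s a b p)"
    using RTT_rel_plus_top_coeff[OF sc R a(1) b i(1) i(1), of p] a Z[OF b]
    by (cases b i rule: linorder_cases) (simp_all add: simps mult.assoc minus_equation_iff[of "_ * _"])
  show "ser tp tm s a b p * tp i (Suc i) 0
      = sc (if b = Suc i then inverse vv else 1) * (tp i (Suc i) 0 * ser tp tm s a b p)
      - (if b = i then sc (vv - inverse vv) * tp i i 0 * ser tp tm s a (Suc i) p else 0)"
    using RTT_rel_plus_top_coeff[OF sc R a(1) b i(1) i(2), of p] a Z[OF b]
    by (cases b i rule: linorder_cases) (simp_all add: simps mult.assoc minus_equation_iff[of "_ * _"])
qed

lemma RTT_rel_column_shift_rel: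
  assumes sc: "Cv_algebra sc" and R: "RTT_rel sc n tp tm False s"
    and Z: "\<And>c. c \<in> {1..n} \<Longrightarrow> c < i \<Longrightarrow> tm c i 0 = 0"
    and d: "d \<in> {1..n}" "d < i" and "i < n"
  shows "shift_rel (tm (Suc i) i 0) (tm i i 0) (sc vv) (sc (vv - inverse vv)) i n (\<lambda>c. ser tp tm s c d q)"
proof (rule shift_rel_of_reversed_products[OF sc])
  fix c assume c: "c \<in> {1..n}"
  have i: "i \<in> {1..n}" "Suc i \<in> {1..n}" using d \<open>i < n\<close> by auto
  note simps = Cv_algebra_hom[OF sc] Cv_algebra_if_neg[OF sc] Cv_algebra_commute[OF sc, symmetric]
  show "ser tp tm s c d q * tm i i 0
      = sc (if c = i then inverse vv else 1) * (tm i i 0 * ser tp tm s c d q)"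
    using RTT_rel_minus_bottom_coeff[OF sc R i(1) i(1) c d(1), of q] d Z[OF c]
    by (cases c i rule: linorder_cases) (simp_all add: simps mult.assoc)
  show "ser tp tm s c d q * tm (Suc i) i 0
      = sc (if c = Suc i then inverse vv else 1) * (tm (Suc i) i 0 * ser tp tm s c d q)
      - (if c = i then sc (vv - inverse vv) * tm i i 0 * ser tp tm s (Suc i) d q else 0)"
    using RTT_rel_minus_bottom_coeff[OF sc R i(2) i(1) c d(1), of q] d Z[OF c]
    by (cases c i rule: linorder_cases)
      (simp_all add: simps mult.assoc equation_minus_iff[of _ "_ * _"])
qed

section \<open>The Gauss decomposition\<close>

lemma fps_unit_if_nth_0_unit:
  fixes f :: "'a::ring_1 fps"
  assumes "u * f $ 0 = 1" "f $ 0 * u = 1"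
  shows "\<exists>g. f * g = 1 \<and> g * f = 1"
  using fps_right_inverse[OF assms(2)] fps_left_inverse'[OF assms] by blast

lemma gauss_Gp:
  assumes "gauss n T F (Gp g) E" "a \<in> {1..n}" "b \<in> {1..n}"
  shows "T a b = (\<Sum>k\<in>{1..n}. F a k * Abs_fps (g k) * E k b)"
proof -
  have "T a b = (\<Sum>k\<in>{1..n}. \<Sum>l\<in>{1..n}. F a k * Gp g k l * E l b)"
    using assms unfolding gauss_def by blast
  also have "\<dots> = (\<Sum>k\<in>{1..n}. F a k * Abs_fps (g k) * E k b)"
    by (intro sum.cong refl) (simp add: Gp_def if_distrib if_distribR sum.delta cong: if_cong)
  finally show ?thesis .
qed

lemma gauss_plus_const:
  assumes "gauss n (Tps tp) (Fp f) (Gp gp) (Ep e)" "a \<in> {1..n}" "b \<in> {1..n}" "a \<le> b"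
  shows "tp a b 0 = gp a 0 * (if a = b then 1 else e a b 0)"
proof -
  have "tp a b 0 = (\<Sum>k\<in>{1..n}. Fp f a k $ 0 * gp k 0 * Ep e k b $ 0)"
    using arg_cong[OF gauss_Gp[OF assms(1-3)], of "\<lambda>h. h $ 0"] by (simp add: Tps_def fps_sum_nth)
  also have "\<dots> = (\<Sum>k\<in>{1..n}. if k = a then gp a 0 * (if a = b then 1 else e a b 0) else 0)"
    using assms(4) by (intro sum.cong refl) (auto simp: Fp_def Ep_def)
  finally show ?thesis using assms(2) by simp
qed

lemma gauss_minus_const:
  assumes "gauss n (Tps tm) (Fm f) (Gp gm) (Em e)" "a \<in> {1..n}" "b \<in> {1..n}" "b \<le> a"
  shows "tm a b 0 = (if a = b then 1 else f a b 0) * gm b 0"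
proof -
  have "tm a b 0 = (\<Sum>k\<in>{1..n}. Fm f a k $ 0 * gm k 0 * Em e k b $ 0)"
    using arg_cong[OF gauss_Gp[OF assms(1-3)], of "\<lambda>h. h $ 0"] by (simp add: Tps_def fps_sum_nth)
  also have "\<dots> = (\<Sum>k\<in>{1..n}. if k = b then (if a = b then 1 else f a b 0) * gm b 0 else 0)"
    using assms(4) by (intro sum.cong refl) (auto simp: Fm_def Em_def)
  finally show ?thesis using assms(3) by simp
qed

lemma gauss_decomp_ldu:
  assumes rel: "RTT_relations sc n tp tm" and gd: "gauss_decomp n tp tm f gp gm e"
  shows "ldu_decomp n (Tps tp) (Fp f) (\<lambda>k. Abs_fps (gp k)) (Ep e)"
    and "ldu_decomp n (Tps tm) (Fm f) (\<lambda>k. Abs_fps (gm k)) (Em e)"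
proof -
  have gP: "gauss n (Tps tp) (Fp f) (Gp gp) (Ep e)" and gM: "gauss n (Tps tm) (Fm f) (Gp gm) (Em e)"
    using gd unfolding gauss_decomp_def by blast+
  have units: "tp k k 0 * tm k k 0 = 1" "tm k k 0 * tp k k 0 = 1" if "k \<in> {1..n}" for k
    using rel that unfolding RTT_relations_def by blast+
  show "ldu_decomp n (Tps tp) (Fp f) (\<lambda>k. Abs_fps (gp k)) (Ep e)"
  proof unfold_locales
    show "Tps tp a b = (\<Sum>k\<in>{1..n}. Fp f a k * Abs_fps (gp k) * Ep e k b)"
      if "a \<in> {1..n}" "b \<in> {1..n}" for a b
      using gauss_Gp[OF gP that] .
    show "\<exists>u. Abs_fps (gp k) * u = 1 \<and> u * Abs_fps (gp k) = 1" if "k \<in> {1..n}" for k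
      using fps_unit_if_nth_0_unit[of "tm k k 0"] gauss_plus_const[OF gP that that] units[OF that]
      by simp
  qed (simp_all add: Fp_def Ep_def)
  show "ldu_decomp n (Tps tm) (Fm f) (\<lambda>k. Abs_fps (gm k)) (Em e)"
  proof unfold_locales
    show "Tps tm a b = (\<Sum>k\<in>{1..n}. Fm f a k * Abs_fps (gm k) * Em e k b)"
      if "a \<in> {1..n}" "b \<in> {1..n}" for a b
      using gauss_Gp[OF gM that] .
    show "\<exists>u. Abs_fps (gm k) * u = 1 \<and> u * Abs_fps (gm k) = 1" if "k \<in> {1..n}" for k
      using fps_unit_if_nth_0_unit[of "tp k k 0"] gauss_minus_const[OF gM that that] units[OF that]
      by simp
  qed (simp_all add: Fm_def Em_def)
qed

lemma Cv_algebra_twist_inverse: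
  assumes sc: "Cv_algebra sc" and ya: "y * a = sc c * a * y" and u: "u * y = 1" "y * u = 1"
  shows "a * u = sc c * u * a"
proof -
  have "a * u = u * (y * a) * u" using u by (simp add: mult.assoc[symmetric])
  also have "\<dots> = u * sc c * a * (y * u)" using ya by (simp add: mult.assoc)
  also have "\<dots> = sc c * u * a" using u(2) Cv_algebra_commute[OF sc, of c u] by simp
  finally show ?thesis .
qed

lemma shift_rel_Suc_eq_qcomm_left:
  assumes sc: "Cv_algebra sc" and R: "shift_rel x y (sc vv) (sc k) i n R" "i \<in> {1..n}"
    and "k \<noteq> 0" and x: "x = y * e0" and u: "u * y = 1" "y * u = 1"
  shows "R (Suc i) = sc (inverse k) * qcomm sc (inverse vv) e0 (R i)"
proof -
  have ya: "y * R i = sc vv * R i * y" and xa: "x * R i = R i * x + sc k * y * R (Suc i)"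
    using R unfolding shift_rel_def by auto
  have e0: "e0 = u * x" using x u by (simp add: mult.assoc[symmetric])
  have "sc (inverse vv) * (R i * e0) = sc (inverse vv) * (R i * u) * x"
    by (simp add: e0 mult.assoc)
  also have "\<dots> = sc (inverse vv) * sc vv * (u * R i * x)"
    by (simp add: Cv_algebra_twist_inverse[OF sc ya u] mult.assoc)
  finally have 1: "sc (inverse vv) * (R i * e0) = u * R i * x"
    using Cv_algebra_inverse(1)[OF sc vv_nonzero] by simp
  have "e0 * R i = u * R i * x + u * sc k * y * R (Suc i)"
    by (simp add: e0 xa distrib_left mult.assoc)
  also have "u * sc k * y * R (Suc i) = sc k * (u * y) * R (Suc i)"
    using Cv_algebra_commute[OF sc, of k u] by (simp add: mult.assoc[symmetric])
  finally have 2: "e0 * R i = u * R i * x + sc k * R (Suc i)" using u by simp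
  show ?thesis
    using 1 2 Cv_algebra_inverse(1)[OF sc \<open>k \<noteq> 0\<close>] by (simp add: qcomm_def mult.assoc[symmetric])
qed

lemma shift_rel_Suc_eq_qcomm_right:
  assumes sc: "Cv_algebra sc" and R: "shift_rel x y (sc vv) (sc k) i n R" "i \<in> {1..n}" "Suc i \<in> {1..n}"
    and "k \<noteq> 0" and x: "x = f0 * y" and u: "u * y = 1" "y * u = 1"
  shows "R (Suc i) = sc (inverse (- k)) * qcomm sc vv (R i) f0"
proof -
  have ya: "y * R i = sc vv * R i * y" and xa: "x * R i = R i * x + sc k * y * R (Suc i)"
    and yb: "y * R (Suc i) = R (Suc i) * y"
    using R unfolding shift_rel_def by auto
  have f0: "f0 = x * u" using x u by (simp add: mult.assoc)
  have "sc vv * (f0 * R i) = x * (sc vv * (u * R i))"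
    using Cv_algebra_commute[OF sc, of vv x] by (simp add: f0 mult.assoc[symmetric])
  also have "sc vv * (u * R i) = R i * u"
    by (simp add: Cv_algebra_twist_inverse[OF sc ya u] mult.assoc)
  finally have "qcomm sc vv (R i) f0 = (R i * x - x * R i) * u"
    by (simp add: qcomm_def f0 left_diff_distrib mult.assoc)
  also have "\<dots> = - (sc k * R (Suc i) * (y * u))"
    by (simp add: xa yb distrib_right mult.assoc)
  finally have "qcomm sc vv (R i) f0 = sc (- k) * R (Suc i)"
    using u Cv_algebra_hom(4)[OF sc] by simp
  then show ?thesis
    using Cv_algebra_inverse(1)[OF sc, of "- k"] \<open>k \<noteq> 0\<close> by (simp add: mult.assoc[symmetric])
qed

lemma e_entry_eq_qcomm:
  assumes sc: "Cv_algebra sc" and rel: "RTT_relations sc n tp tm"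
    and gd: "gauss_decomp n tp tm f gp gm e" and "1 \<le> j" "j < i" "i < n"
  shows "e j (Suc i) r = sc (inverse (vv - inverse vv)) * qcomm sc (inverse vv) (e i (Suc i) 0) (e j i r)"
proof -
  interpret P: ldu_decomp n "Tps tp" "Fp f" "\<lambda>k. Abs_fps (gp k)" "Ep e"
    by (rule gauss_decomp_ldu(1)[OF rel gd])
  interpret M: ldu_decomp n "Tps tm" "Fm f" "\<lambda>k. Abs_fps (gm k)" "Em e"
    by (rule gauss_decomp_ldu(2)[OF rel gd])
  have i: "i \<in> {1..n}" "j \<in> {1..n}" using assms by auto
  have RTT: "RTT_rel sc n tp tm True True" "RTT_rel sc n tp tm False True"
    and Z: "\<And>b. b \<in> {1..n} \<Longrightarrow> b < i \<Longrightarrow> tp i b 0 = 0"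
    and u: "tm i i 0 * tp i i 0 = 1" "tp i i 0 * tm i i 0 = 1"
    using rel i(1) unfolding RTT_relations_def by blast+
  let ?rel = "shift_rel (tp i (Suc i) 0) (tp i i 0) (sc vv) (sc (vv - inverse vv)) i n"
  let ?fps_rel = "shift_rel (fps_const (tp i (Suc i) 0)) (fps_const (tp i i 0))
                    (fps_const (sc vv)) (fps_const (sc (vv - inverse vv))) i n"
  have central: "fps_const (sc c) \<in> commutant UNIV" for c
    using Cv_algebra_commute[OF sc] by (intro fps_const_commutant_UNIV) (simp add: commutant_def)
  have "?rel (\<lambda>b. Tps tp a b $ m) \<and> ?rel (\<lambda>b. Tps tm a b $ m)" if "a \<in> {1..n}" "a < i" for a m
    using RTT_rel_row_shift_rel[OF sc RTT(1) Z that \<open>i < n\<close>, of "- int m"]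
      RTT_rel_row_shift_rel[OF sc RTT(2) Z that \<open>i < n\<close>, of "int m"]
    by (simp add: Tps_def ser_def)
  then have "?fps_rel (Tps tp a)" "?fps_rel (Tps tm a)" if "a \<in> {1..n}" "a < i" for a
    using that unfolding shift_rel_fps_const_iff by blast+
  then have "?fps_rel (Ep e j)" "?fps_rel (Em e j)"
    using P.E_rows_shift_rel M.E_rows_shift_rel central i(2) \<open>j < i\<close> \<open>i < n\<close> by blast+
  then have "?rel (\<lambda>b. Ep e j b $ m) \<and> ?rel (\<lambda>b. Em e j b $ m)" for m
    unfolding shift_rel_fps_const_iff by blast
  moreover have "Ep e j b $ nat r = e j b r" if "0 \<le> r" "j < b" for b
    using that by (simp add: Ep_def)
  moreover have "Em e j b $ nat (- r) = e j b r" if "r < 0" "j < b" for b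
    using that by (simp add: Em_def)
  ultimately obtain R where R: "?rel R" "R i = e j i r" "R (Suc i) = e j (Suc i) r"
    using \<open>j < i\<close> by (cases "0 \<le> r") fastforce+
  have "tp i (Suc i) 0 = tp i i 0 * e i (Suc i) 0"
    using gauss_plus_const[of n tp f gp e] gd i(1) \<open>i < n\<close> unfolding gauss_decomp_def by force
  then show ?thesis
    using shift_rel_Suc_eq_qcomm_left[OF sc R(1) i(1) vv_diff_inverse_nonzero _ u] R(2,3) by simp
qed

lemma f_entry_eq_qcomm:
  assumes sc: "Cv_algebra sc" and rel: "RTT_relations sc n tp tm"
    and gd: "gauss_decomp n tp tm f gp gm e" and "1 \<le> j" "j < i" "i < n"
  shows "f (Suc i) j r = sc (inverse (inverse vv - vv)) * qcomm sc vv (f i j r) (f (Suc i) i 0)"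
proof -
  interpret P: ldu_decomp n "Tps tp" "Fp f" "\<lambda>k. Abs_fps (gp k)" "Ep e"
    by (rule gauss_decomp_ldu(1)[OF rel gd])
  interpret M: ldu_decomp n "Tps tm" "Fm f" "\<lambda>k. Abs_fps (gm k)" "Em e"
    by (rule gauss_decomp_ldu(2)[OF rel gd])
  have i: "i \<in> {1..n}" "Suc i \<in> {1..n}" "j \<in> {1..n}" using assms by auto
  have RTT: "RTT_rel sc n tp tm False True" "RTT_rel sc n tp tm False False"
    and Z: "\<And>c. c \<in> {1..n} \<Longrightarrow> c < i \<Longrightarrow> tm c i 0 = 0"
    and u: "tp i i 0 * tm i i 0 = 1" "tm i i 0 * tp i i 0 = 1"
    using rel i(1) unfolding RTT_relations_def by blast+
  let ?rel = "shift_rel (tm (Suc i) i 0) (tm i i 0) (sc vv) (sc (vv - inverse vv)) i n"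
  let ?fps_rel = "shift_rel (fps_const (tm (Suc i) i 0)) (fps_const (tm i i 0))
                    (fps_const (sc vv)) (fps_const (sc (vv - inverse vv))) i n"
  have "?rel (\<lambda>c. Tps tp c d $ m) \<and> ?rel (\<lambda>c. Tps tm c d $ m)" if "d \<in> {1..n}" "d < i" for d m
    using RTT_rel_column_shift_rel[OF sc RTT(1) Z that \<open>i < n\<close>, of "- int m"]
      RTT_rel_column_shift_rel[OF sc RTT(2) Z that \<open>i < n\<close>, of "int m"]
    by (simp add: Tps_def ser_def)
  then have "?fps_rel (\<lambda>c. Tps tp c d)" "?fps_rel (\<lambda>c. Tps tm c d)" if "d \<in> {1..n}" "d < i" for d
    using that unfolding shift_rel_fps_const_iff by blast+
  then have "?fps_rel (\<lambda>c. Fp f c j)" "?fps_rel (\<lambda>c. Fm f c j)"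
    using P.F_columns_shift_rel M.F_columns_shift_rel i(3) \<open>j < i\<close> \<open>i < n\<close> by blast+
  then have "?rel (\<lambda>c. Fp f c j $ m) \<and> ?rel (\<lambda>c. Fm f c j $ m)" for m
    unfolding shift_rel_fps_const_iff by blast
  moreover have "Fp f c j $ nat r = f c j r" if "0 < r" "j < c" for c
    using that by (simp add: Fp_def)
  moreover have "Fm f c j $ nat (- r) = f c j r" if "r \<le> 0" "j < c" for c
    using that by (simp add: Fm_def)
  ultimately obtain R where R: "?rel R" "R i = f i j r" "R (Suc i) = f (Suc i) j r"
    using \<open>j < i\<close> by (cases "0 < r") fastforce+
  have "tm (Suc i) i 0 = f (Suc i) i 0 * tm i i 0"
    using gauss_minus_const[of n tm f gm e] gd i unfolding gauss_decomp_def by force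
  then show ?thesis
    using shift_rel_Suc_eq_qcomm_right[OF sc R(1) i(1,2) vv_diff_inverse_nonzero _ u] R(2,3) by simp
qed

theorem proposition3p21:
  fixes sc :: "Cv \<Rightarrow> 'a::ring_1"
    and n :: nat
    and tp tm :: "nat \<Rightarrow> nat \<Rightarrow> nat \<Rightarrow> 'a"
    and e f :: "nat \<Rightarrow> nat \<Rightarrow> int \<Rightarrow> 'a"
    and gp gm :: "nat \<Rightarrow> nat \<Rightarrow> 'a"
  assumes "Cv_algebra sc"
    and "RTT_relations sc n tp tm"
    and "gauss_decomp n tp tm f gp gm e"
    and "1 \<le> j" and "j < i" and "i < n"
  shows "\<forall>r::int.
           e j (i + 1) r = sc (inverse (vv - inverse vv)) * qcomm sc (inverse vv) (e i (i + 1) 0) (e j i r)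
         \<and> f (i + 1) j r = sc (inverse (inverse vv - vv)) * qcomm sc vv (f i j r) (f (i + 1) i 0)"
  using e_entry_eq_qcomm[OF assms] f_entry_eq_qcomm[OF assms] by simp

end
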